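(* Let $\phi:X\to Y$ be a morphism of $\mathrm{Agg}^{\rm ctd}$. Then the automorphism group of $\phi$ in the arrow category, i.e. the group of pairs $(\alpha,\beta)\in\mathrm{Aut}(X)\times\mathrm{Aut}(Y)$ with $\beta\circ\phi=\phi\circ\alpha$, is isomorphic to the automorphism group (in $\mathrm{Gr}$) of the ghost graph $\mathbb{\Gamma}(\phi)$.
   Context: A graph $\Gamma=(F,V,\partial,\imath)$ consists of finite sets $F$ (flags) and $V$ (vertices), a map $\partial:F\to V$ and an involution $\imath$ of $F$. The two-element orbits of $\imath$ are the edges, the fixed points the outer flags. A graph morphism $\phi:\Gamma\to\Gamma'=(F',V',\partial',\imath')$ is a triple $(\phi_V,\phi^F,\imath_\phi)$ with $\phi_V:V\to V'$ surjective, $\phi^F:F'\to F$ injective and $\imath_\phi$ a fixed-point-free involution of $F\setminus\phi^F(F')$, such that: (i) $\phi_V\partial\phi^F=\partial'$ and $\phi_V\partial(f)=\phi_V\partial(\imath_\phi f)$ for $f\notin\phi^F(F')$; (ii) for $f\notin\phi^F(F')$, either $\{f,\imath f\}$ is an edge of $\Gamma$ and $\imath_\phi f=\imath f$, or $f$ and $\imath_\phi f$ are both outer flags of $\Gamma$; (iii) if $f'\in F'$ and $\phi^F(f')$ lies on an edge of $\Gamma$, then $\imath(\phi^F f')=\phi^F(\imath' f')$. Composition: $(\psi\phi)_V=\psi_V\phi_V$, $(\psi\phi)^F=\phi^F\psi^F$, $\imath_{\psi\phi}$ equals $\imath_\phi$ off $\phi^F(F')$ and $\phi^F\imath_\psi(\phi^F)^{-1}$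 on $\phi^F(F'\setminus\psi^F(F''))$; this is the category $\mathrm{Gr}$. Isomorphisms: $\phi_V,\phi^F$ bijective. The ghost graph of $\phi$ is $\mathbb{\Gamma}(\phi)=(F,V,\partial,\hat\imath_\phi)$, $\hat\imath_\phi$ extending $\imath_\phi$ by the identity on $\phi^F(F')$. An aggregate is a graph with $\imath=\mathrm{id}$. For distinct outer flags $s,t$ of an aggregate, the virtual edge contraction ${}_s\circ_t$ ($\partial s\neq\partial t$) resp. virtual loop contraction $\circ_{st}$ ($\partial s=\partial t$) is the morphism $(\text{quotient } V\to V/(\partial s\sim\partial t),\ \text{inclusion } F\setminus\{s,t\}\hookrightarrow F,\ \imath_\phi(s)=t)$. $\mathrm{Agg}^{\rm ctd}$ is the category of aggregates whose morphisms are generated by isomorphisms and virtual edge and loop contractions. *)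

theory Defs
  imports "HOL-Algebra.Group" "HOL-Library.FuncSet"
begin

text \<open>Graphs (F, V, boundary, involution). All graphs considered in one statement
live in a common flag type 'f and vertex type 'v. Functions are only meaningful on
the flags/vertices.\<close>

record ('f, 'v) gph =
  gF :: "'f set"
  gV :: "'v set"
  gbd :: "'f \<Rightarrow> 'v"
  ginv :: "'f \<Rightarrow> 'f"

definition is_graph :: "('f, 'v) gph \<Rightarrow> bool" where
  "is_graph G \<longleftrightarrow> finite (gF G) \<and> finite (gV G) \<and>
     (\<forall>f\<in>gF G. gbd G f \<in> gV G) \<and>
     (\<forall>f\<in>gF G. ginv G f \<in> gF G \<and> ginv G (ginv G f) = f)"

text \<open>A morphism phi : G -> G' is a triple (phi_V, phi^F, i_phi) with
phi_V : V -> V', phi^F : F' -> F and i_phi an involution on F - phi^F(F').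
The maps are taken extensional (value undefined outside their domains), so that
morphisms are equal iff they agree as triples of partial maps.\<close>

record ('f, 'v) gmor =
  mV :: "'v \<Rightarrow> 'v"
  mF :: "'f \<Rightarrow> 'f"
  mI :: "'f \<Rightarrow> 'f"

definition is_mor :: "('f, 'v) gph \<Rightarrow> ('f, 'v) gph \<Rightarrow> ('f, 'v) gmor \<Rightarrow> bool" where
  "is_mor G G' \<phi> \<longleftrightarrow>
     is_graph G \<and> is_graph G' \<and>
     mV \<phi> \<in> extensional (gV G) \<and>
     mF \<phi> \<in> extensional (gF G') \<and>
     mI \<phi> \<in> extensional (gF G - mF \<phi> ` gF G') \<and>
     mV \<phi> ` gV G = gV G' \<and>
     mF \<phi> ` gF G' \<subseteq> gF G \<and> inj_on (mF \<phi>) (gF G') \<and>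
     (\<forall>f \<in> gF G - mF \<phi> ` gF G'.
        mI \<phi> f \<in> gF G - mF \<phi> ` gF G' \<and> mI \<phi> (mI \<phi> f) = f \<and> mI \<phi> f \<noteq> f) \<and>
     (\<forall>f' \<in> gF G'. mV \<phi> (gbd G (mF \<phi> f')) = gbd G' f') \<and>
     (\<forall>f \<in> gF G - mF \<phi> ` gF G'. mV \<phi> (gbd G f) = mV \<phi> (gbd G (mI \<phi> f))) \<and>
     (\<forall>f \<in> gF G - mF \<phi> ` gF G'.
        (ginv G f \<noteq> f \<and> mI \<phi> f = ginv G f) \<or>
        (ginv G f = f \<and> ginv G (mI \<phi> f) = mI \<phi> f)) \<and>
     (\<forall>f' \<in> gF G'. ginv G (mF \<phi> f') \<noteq> mF \<phi> f' \<longrightarrow>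
        ginv G (mF \<phi> f') = mF \<phi> (ginv G' f'))"

definition mor_comp :: "('f, 'v) gph \<Rightarrow> ('f, 'v) gph \<Rightarrow> ('f, 'v) gph \<Rightarrow>
    ('f, 'v) gmor \<Rightarrow> ('f, 'v) gmor \<Rightarrow> ('f, 'v) gmor" where
  "mor_comp G G' G'' \<psi> \<phi> =
     \<lparr> mV = restrict (\<lambda>v. mV \<psi> (mV \<phi> v)) (gV G),
       mF = restrict (\<lambda>f. mF \<phi> (mF \<psi> f)) (gF G''),
       mI = restrict (\<lambda>f. if f \<notin> mF \<phi> ` gF G' then mI \<phi> f
                          else mF \<phi> (mI \<psi> (the_inv_into (gF G') (mF \<phi>) f)))
              (gF G - mF \<phi> ` (mF \<psi> ` gF G'')) \<rparr>"

definition mor_id :: "('f, 'v) gph \<Rightarrow> ('f, 'v) gmor" where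
  "mor_id G = \<lparr> mV = restrict id (gV G), mF = restrict id (gF G), mI = (\<lambda>_. undefined) \<rparr>"

definition is_iso_mor :: "('f, 'v) gph \<Rightarrow> ('f, 'v) gph \<Rightarrow> ('f, 'v) gmor \<Rightarrow> bool" where
  "is_iso_mor G G' \<phi> \<longleftrightarrow> is_mor G G' \<phi> \<and>
     bij_betw (mV \<phi>) (gV G) (gV G') \<and> bij_betw (mF \<phi>) (gF G') (gF G)"

definition ghost :: "('f, 'v) gph \<Rightarrow> ('f, 'v) gph \<Rightarrow> ('f, 'v) gmor \<Rightarrow> ('f, 'v) gph" where
  "ghost G G' \<phi> = \<lparr> gF = gF G, gV = gV G, gbd = gbd G,
     ginv = (\<lambda>f. if f \<in> mF \<phi> ` gF G' then f else mI \<phi> f) \<rparr>"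

definition is_aggregate :: "('f, 'v) gph \<Rightarrow> bool" where
  "is_aggregate G \<longleftrightarrow> is_graph G \<and> (\<forall>f\<in>gF G. ginv G f = f)"

text \<open>The quotient
V/(bd s ~ bd t) is represented by V with bd t identified to bd s (a canonical
representative; Agg^ctd is closed under isomorphisms anyway).\<close>
definition contr_vmap :: "('f, 'v) gph \<Rightarrow> 'f \<Rightarrow> 'f \<Rightarrow> 'v \<Rightarrow> 'v" where
  "contr_vmap G s t = (\<lambda>v. if v = gbd G t then gbd G s else v)"

definition contr_target :: "('f, 'v) gph \<Rightarrow> 'f \<Rightarrow> 'f \<Rightarrow> ('f, 'v) gph" where
  "contr_target G s t = \<lparr> gF = gF G - {s, t}, gV = contr_vmap G s t ` gV G,
     gbd = (\<lambda>f. contr_vmap G s t (gbd G f)), ginv = id \<rparr>"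

definition contr_mor :: "('f, 'v) gph \<Rightarrow> 'f \<Rightarrow> 'f \<Rightarrow> ('f, 'v) gmor" where
  "contr_mor G s t = \<lparr> mV = restrict (contr_vmap G s t) (gV G),
     mF = restrict id (gF G - {s, t}),
     mI = restrict (\<lambda>f. if f = s then t else s) {s, t} \<rparr>"

inductive ctd_mor :: "('f, 'v) gph \<Rightarrow> ('f, 'v) gph \<Rightarrow> ('f, 'v) gmor \<Rightarrow> bool" where
  iso: "is_aggregate X \<Longrightarrow> is_aggregate Y \<Longrightarrow> is_iso_mor X Y \<phi> \<Longrightarrow> ctd_mor X Y \<phi>"
| contr: "is_aggregate X \<Longrightarrow> s \<in> gF X \<Longrightarrow> t \<in> gF X \<Longrightarrow> s \<noteq> t \<Longrightarrow>
          ctd_mor X (contr_target X s t) (contr_mor X s t)"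
| comp: "ctd_mor X Y \<phi> \<Longrightarrow> ctd_mor Y Z \<psi> \<Longrightarrow> ctd_mor X Z (mor_comp X Y Z \<psi> \<phi>)"

definition aut_group :: "('f, 'v) gph \<Rightarrow> ('f, 'v) gmor monoid" where
  "aut_group G = \<lparr> carrier = {\<alpha>. is_iso_mor G G \<alpha>},
     mult = (\<lambda>\<alpha> \<beta>. mor_comp G G G \<alpha> \<beta>), one = mor_id G \<rparr>"

definition arrow_aut_group :: "('f, 'v) gph \<Rightarrow> ('f, 'v) gph \<Rightarrow> ('f, 'v) gmor
    \<Rightarrow> (('f, 'v) gmor \<times> ('f, 'v) gmor) monoid" where
  "arrow_aut_group X Y \<phi> = \<lparr> carrier = {(\<alpha>, \<beta>). is_iso_mor X X \<alpha> \<and> is_iso_mor Y Y \<beta> \<and>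
        mor_comp X Y Y \<beta> \<phi> = mor_comp X X Y \<phi> \<alpha>},
     mult = (\<lambda>(\<alpha>, \<beta>) (\<alpha>', \<beta>'). (mor_comp X X X \<alpha> \<alpha>', mor_comp Y Y Y \<beta> \<beta>')),
     one = (mor_id X, mor_id Y) \<rparr>"

end

(* An automorphism of the ghost graph of phi is the same as an automorphism alpha of X that maps
   the flags retained by phi onto themselves and commutes with the pairing i_phi of the contracted
   flags.  For an automorphism (alpha, beta) of phi, the equation beta phi = phi alpha forces both
   properties and determines beta, since phi_V is surjective and phi^F injective.  Conversely alpha
   induces such a beta as soon as every fibre of phi_V is connected by ghost edges (the vertex pairs
   of flags paired by i_phi): alpha maps ghost edges to ghost edges, so phi_V alpha_V is constant on
   the fibres of phi_V.  Fibre connectivity holds for isomorphisms and virtual contractions and is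
   stable under composition, hence for all morphisms of Agg^ctd, and (alpha, beta) |-> alpha is the
   required isomorphism of groups. *)

theory Submission
  imports Defs
begin

lemma restrict_eq_restrict_iff: "restrict f A = restrict g A \<longleftrightarrow> (\<forall>x \<in> A. f x = g x)"
  by (metis restrict_apply' restrict_ext)

lemma bij_betw_image_Diff_invariant:
  assumes "bij_betw h S S" "A \<subseteq> S" "h ` A = A"
  shows "h ` (S - A) = S - A"
proof -
  have "h ` (S - A) = h ` S - h ` A"
    using assms by (intro inj_on_image_set_diff) (auto simp: bij_betw_def)
  then show ?thesis
    using assms by (simp add: bij_betw_def)
qed

lemma is_morD:
  assumes "is_mor G G' \<phi>"
  shows "is_graph G" "is_graph G'" "mV \<phi> \<in> extensional (gV G)"
    "mF \<phi> \<in> extensional (gF G')" "mI \<phi> \<in> extensional (gF G - mF \<phi> ` gF G')"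
    "mV \<phi> ` gV G = gV G'" "mF \<phi> ` gF G' \<subseteq> gF G" "inj_on (mF \<phi>) (gF G')"
    "\<And>f. f \<in> gF G - mF \<phi> ` gF G' \<Longrightarrow> mI \<phi> f \<in> gF G - mF \<phi> ` gF G'"
    "\<And>f. f \<in> gF G - mF \<phi> ` gF G' \<Longrightarrow> mI \<phi> (mI \<phi> f) = f"
    "\<And>f. f \<in> gF G - mF \<phi> ` gF G' \<Longrightarrow> mI \<phi> f \<noteq> f"
    "\<And>f'. f' \<in> gF G' \<Longrightarrow> mV \<phi> (gbd G (mF \<phi> f')) = gbd G' f'"
    "\<And>f. f \<in> gF G - mF \<phi> ` gF G' \<Longrightarrow> mV \<phi> (gbd G f) = mV \<phi> (gbd G (mI \<phi> f))"
  using assms unfolding is_mor_def by blast+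

lemma is_graph_bd_in: "is_graph G \<Longrightarrow> f \<in> gF G \<Longrightarrow> gbd G f \<in> gV G"
  by (simp add: is_graph_def)

lemma is_mor_aggregateI:
  assumes "is_aggregate G" "is_aggregate G'" "mV \<phi> \<in> extensional (gV G)"
    "mF \<phi> \<in> extensional (gF G')" "mI \<phi> \<in> extensional (gF G - mF \<phi> ` gF G')"
    "mV \<phi> ` gV G = gV G'" "mF \<phi> ` gF G' \<subseteq> gF G" "inj_on (mF \<phi>) (gF G')"
    "\<And>f. f \<in> gF G - mF \<phi> ` gF G' \<Longrightarrow> mI \<phi> f \<in> gF G - mF \<phi> ` gF G'"
    "\<And>f. f \<in> gF G - mF \<phi> ` gF G' \<Longrightarrow> mI \<phi> (mI \<phi> f) = f"
    "\<And>f. f \<in> gF G - mF \<phi> ` gF G' \<Longrightarrow> mI \<phi> f \<noteq> f"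
    "\<And>f'. f' \<in> gF G' \<Longrightarrow> mV \<phi> (gbd G (mF \<phi> f')) = gbd G' f'"
    "\<And>f. f \<in> gF G - mF \<phi> ` gF G' \<Longrightarrow> mV \<phi> (gbd G f) = mV \<phi> (gbd G (mI \<phi> f))"
  shows "is_mor G G' \<phi>"
proof -
  have fixed: "ginv G f = f" if "f \<in> gF G" for f
    using assms(1) that by (simp add: is_aggregate_def)
  have graphs: "is_graph G" "is_graph G'"
    using assms(1,2) by (simp_all add: is_aggregate_def)
  show ?thesis
    unfolding is_mor_def
  proof (intro conjI)
    show "\<forall>f \<in> gF G - mF \<phi> ` gF G'.
        mI \<phi> f \<in> gF G - mF \<phi> ` gF G' \<and> mI \<phi> (mI \<phi> f) = f \<and> mI \<phi> f \<noteq> f"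
      using assms(9-11) by blast
    show "\<forall>f \<in> gF G - mF \<phi> ` gF G'.
        (ginv G f \<noteq> f \<and> mI \<phi> f = ginv G f) \<or> (ginv G f = f \<and> ginv G (mI \<phi> f) = mI \<phi> f)"
      using fixed assms(9) by blast
    show "\<forall>f' \<in> gF G'. ginv G (mF \<phi> f') \<noteq> mF \<phi> f' \<longrightarrow> ginv G (mF \<phi> f') = mF \<phi> (ginv G' f')"
      using fixed assms(7) by blast
  qed (fact graphs assms(3-8) | use assms(12,13) in blast)+
qed

lemma automorphismD:
  assumes "is_iso_mor G G \<alpha>"
  shows "is_graph G" "mV \<alpha> \<in> extensional (gV G)" "mF \<alpha> \<in> extensional (gF G)"
    "bij_betw (mV \<alpha>) (gV G) (gV G)" "bij_betw (mF \<alpha>) (gF G) (gF G)"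
    "\<And>f. f \<in> gF G \<Longrightarrow> mV \<alpha> (gbd G (mF \<alpha> f)) = gbd G f"
    "\<And>f. f \<in> gF G \<Longrightarrow> ginv G (mF \<alpha> f) \<noteq> mF \<alpha> f \<Longrightarrow> ginv G (mF \<alpha> f) = mF \<alpha> (ginv G f)"
  using assms unfolding is_iso_mor_def is_mor_def by blast+

lemma automorphism_mI:
  assumes "is_iso_mor G G \<alpha>"
  shows "mI \<alpha> = (\<lambda>_. undefined)"
proof -
  have "gF G - mF \<alpha> ` gF G = {}"
    using assms by (simp add: is_iso_mor_def bij_betw_def)
  moreover have "mI \<alpha> \<in> extensional (gF G - mF \<alpha> ` gF G)"
    using assms by (simp add: is_iso_mor_def is_mor_def)
  ultimately show ?thesis by (auto simp: extensional_def)
qed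

lemma automorphismI:
  assumes "is_graph G" "mV \<alpha> \<in> extensional (gV G)" "mF \<alpha> \<in> extensional (gF G)"
    "mI \<alpha> = (\<lambda>_. undefined)"
    "bij_betw (mV \<alpha>) (gV G) (gV G)" "bij_betw (mF \<alpha>) (gF G) (gF G)"
    "\<And>f. f \<in> gF G \<Longrightarrow> mV \<alpha> (gbd G (mF \<alpha> f)) = gbd G f"
    "\<And>f. f \<in> gF G \<Longrightarrow> ginv G (mF \<alpha> f) \<noteq> mF \<alpha> f \<Longrightarrow> ginv G (mF \<alpha> f) = mF \<alpha> (ginv G f)"
  shows "is_iso_mor G G \<alpha>"
  using assms by (simp add: is_iso_mor_def is_mor_def bij_betw_def)

lemma aggregate_automorphismI:
  assumes "is_aggregate G" "mV \<alpha> \<in> extensional (gV G)" "mF \<alpha> \<in> extensional (gF G)"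
    "mI \<alpha> = (\<lambda>_. undefined)"
    "mV \<alpha> ` gV G = gV G" "mF \<alpha> ` gF G \<subseteq> gF G" "inj_on (mF \<alpha>) (gF G)"
    "\<And>f. f \<in> gF G \<Longrightarrow> mV \<alpha> (gbd G (mF \<alpha> f)) = gbd G f"
  shows "is_iso_mor G G \<alpha>"
proof (rule automorphismI)
  have fin: "finite (gV G)" "finite (gF G)" using assms(1) by (simp_all add: is_aggregate_def is_graph_def)
  show "bij_betw (mV \<alpha>) (gV G) (gV G)"
    using assms(5) fin(1) by (simp add: bij_betw_def finite_surj_inj)
  show "bij_betw (mF \<alpha>) (gF G) (gF G)"
    using assms(6,7) fin(2) by (simp add: bij_betw_def endo_inj_surj)
qed (use assms in \<open>auto simp: is_aggregate_def\<close>)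

lemma mV_mor_comp: "mV (mor_comp G G' G'' \<psi> \<phi>) = restrict (\<lambda>v. mV \<psi> (mV \<phi> v)) (gV G)"
  by (simp add: mor_comp_def)

lemma mF_mor_comp: "mF (mor_comp G G' G'' \<psi> \<phi>) = restrict (\<lambda>f. mF \<phi> (mF \<psi> f)) (gF G'')"
  by (simp add: mor_comp_def)

lemma mor_comp_contracted_flags:
  assumes \<phi>: "is_mor G G' \<phi>" and \<psi>: "is_mor G' G'' \<psi>"
  shows "gF G - mF (mor_comp G G' G'' \<psi> \<phi>) ` gF G'' =
    (gF G - mF \<phi> ` gF G') \<union> mF \<phi> ` (gF G' - mF \<psi> ` gF G'')"
proof -
  have comp: "mF (mor_comp G G' G'' \<psi> \<phi>) ` gF G'' = mF \<phi> ` mF \<psi> ` gF G''"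
    by (auto simp: mF_mor_comp)
  have diff: "mF \<phi> ` (gF G' - mF \<psi> ` gF G'') = mF \<phi> ` gF G' - mF \<phi> ` mF \<psi> ` gF G''"
    using is_morD(7,8)[OF \<phi>] is_morD(7)[OF \<psi>] by (intro inj_on_image_set_diff) auto
  show ?thesis
    unfolding comp diff using is_morD(7)[OF \<phi>] image_mono[OF is_morD(7)[OF \<psi>], of "mF \<phi>"]
    by blast
qed

lemma mI_mor_comp_outer:
  assumes \<psi>: "is_mor G' G'' \<psi>" and f: "f \<in> gF G - mF \<phi> ` gF G'"
  shows "mI (mor_comp G G' G'' \<psi> \<phi>) f = mI \<phi> f"
  using f is_morD(7)[OF \<psi>] by (auto simp: mor_comp_def)

lemma mI_mor_comp_inner:
  assumes \<phi>: "is_mor G G' \<phi>" and \<psi>: "is_mor G' G'' \<psi>" and g: "g \<in> gF G' - mF \<psi> ` gF G''"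
  shows "mI (mor_comp G G' G'' \<psi> \<phi>) (mF \<phi> g) = mF \<phi> (mI \<psi> g)"
proof -
  have "mF \<phi> g \<in> gF G - mF \<phi> ` mF \<psi> ` gF G''"
    using mor_comp_contracted_flags[OF \<phi> \<psi>] g by (auto simp: mF_mor_comp)
  moreover have "the_inv_into (gF G') (mF \<phi>) (mF \<phi> g) = g"
    using g is_morD(8)[OF \<phi>] by (simp add: the_inv_into_f_f)
  ultimately show ?thesis
    using g by (simp add: mor_comp_def)
qed

lemma mI_mor_comp_props:
  assumes \<phi>: "is_mor G G' \<phi>" and \<psi>: "is_mor G' G'' \<psi>"
    and f: "f \<in> gF G - mF (mor_comp G G' G'' \<psi> \<phi>) ` gF G''"
  defines "\<iota> \<equiv> mI (mor_comp G G' G'' \<psi> \<phi>)" and "\<chi> \<equiv> mV (mor_comp G G' G'' \<psi> \<phi>)"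
  shows "\<iota> f \<in> gF G - mF (mor_comp G G' G'' \<psi> \<phi>) ` gF G''" and "\<iota> (\<iota> f) = f" and "\<iota> f \<noteq> f"
    and "\<chi> (gbd G f) = \<chi> (gbd G (\<iota> f))"
proof -
  note P = is_morD[OF \<phi>] and Q = is_morD[OF \<psi>]
  have bd: "gbd G f \<in> gV G" if "f \<in> gF G" for f
    using P(1) that by (rule is_graph_bd_in)
  have "\<iota> f \<in> gF G - mF (mor_comp G G' G'' \<psi> \<phi>) ` gF G'' \<and> \<iota> (\<iota> f) = f \<and> \<iota> f \<noteq> f \<and>
      \<chi> (gbd G f) = \<chi> (gbd G (\<iota> f))"
  proof (cases "f \<in> gF G - mF \<phi> ` gF G'")
    case True
    have f': "mI \<phi> f \<in> gF G - mF \<phi> ` gF G'"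
      using True P(9) by blast
    have \<iota>: "\<iota> f = mI \<phi> f" "\<iota> (mI \<phi> f) = f"
      using True f' P(10) mI_mor_comp_outer[OF \<psi>] unfolding \<iota>_def by simp_all
    have "\<chi> (gbd G f) = mV \<psi> (mV \<phi> (gbd G f))"
      using True bd unfolding \<chi>_def mV_mor_comp by simp
    also have "\<dots> = mV \<psi> (mV \<phi> (gbd G (mI \<phi> f)))"
      using True P(13) by simp
    also have "\<dots> = \<chi> (gbd G (mI \<phi> f))"
      using f' bd unfolding \<chi>_def mV_mor_comp by simp
    finally show ?thesis
      using \<iota> f' True P(11) mor_comp_contracted_flags[OF \<phi> \<psi>] by simp
  next
    case False
    then obtain g where g: "g \<in> gF G' - mF \<psi> ` gF G''" and fg: "f = mF \<phi> g"
      using f mor_comp_contracted_flags[OF \<phi> \<psi>] by blast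
    have g': "mI \<psi> g \<in> gF G' - mF \<psi> ` gF G''"
      using g Q(9) by blast
    have \<iota>: "\<iota> f = mF \<phi> (mI \<psi> g)" "\<iota> (mF \<phi> (mI \<psi> g)) = f"
      using g g' fg Q(10) mI_mor_comp_inner[OF \<phi> \<psi>] unfolding \<iota>_def by simp_all
    have "\<chi> (gbd G f) = mV \<psi> (gbd G' g)"
      using g fg bd P(7,12) unfolding \<chi>_def mV_mor_comp by auto
    also have "\<dots> = mV \<psi> (gbd G' (mI \<psi> g))"
      using g Q(13) by simp
    also have "\<dots> = \<chi> (gbd G (mF \<phi> (mI \<psi> g)))"
      using g' bd P(7,12) unfolding \<chi>_def mV_mor_comp by auto
    finally show ?thesis
      using \<iota> g g' fg Q(11) P(8) mor_comp_contracted_flags[OF \<phi> \<psi>]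
      by (auto simp: inj_on_def)
  qed
  then show "\<iota> f \<in> gF G - mF (mor_comp G G' G'' \<psi> \<phi>) ` gF G''" and "\<iota> (\<iota> f) = f" and "\<iota> f \<noteq> f"
    and "\<chi> (gbd G f) = \<chi> (gbd G (\<iota> f))" by blast+
qed

lemma is_mor_comp_aggregate:
  assumes X: "is_aggregate X" and Z: "is_aggregate Z"
    and \<phi>: "is_mor X Y \<phi>" and \<psi>: "is_mor Y Z \<psi>"
  shows "is_mor X Z (mor_comp X Y Z \<psi> \<phi>)"
proof (rule is_mor_aggregateI[OF X Z])
  note P = is_morD[OF \<phi>] and Q = is_morD[OF \<psi>]
  let ?c = "mor_comp X Y Z \<psi> \<phi>"
  show "mV ?c \<in> extensional (gV X)" "mF ?c \<in> extensional (gF Z)"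
    by (simp_all add: mV_mor_comp mF_mor_comp)
  show "mI ?c \<in> extensional (gF X - mF ?c ` gF Z)"
    by (simp add: mor_comp_def image_image)
  show "mV ?c ` gV X = gV Z"
    using P(6) Q(6) by (simp add: mV_mor_comp image_image[symmetric])
  show "mF ?c ` gF Z \<subseteq> gF X"
    using P(7) Q(7) by (auto simp: mF_mor_comp)
  show "inj_on (mF ?c) (gF Z)"
    using comp_inj_on[OF Q(8) inj_on_subset[OF P(8) Q(7)]]
    by (simp add: mF_mor_comp inj_on_def)
  show "mV ?c (gbd X (mF ?c f)) = gbd Z f" if "f \<in> gF Z" for f
  proof -
    have "mF \<psi> f \<in> gF Y" "mF \<phi> (mF \<psi> f) \<in> gF X"
      using that P(7) Q(7) by blast+
    then show ?thesis
      using that P(1,12) Q(12) by (simp add: mV_mor_comp mF_mor_comp is_graph_bd_in)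
  qed
qed (use mI_mor_comp_props[OF \<phi> \<psi>] in blast)+

definition ghost_adj :: "('f, 'v) gph \<Rightarrow> ('f, 'v) gph \<Rightarrow> ('f, 'v) gmor \<Rightarrow> ('v \<times> 'v) set" where
  "ghost_adj X Y \<phi> = {(gbd X f, gbd X (mI \<phi> f)) | f. f \<in> gF X - mF \<phi> ` gF Y}"

definition fibres_ghost_connected :: "('f, 'v) gph \<Rightarrow> ('f, 'v) gph \<Rightarrow> ('f, 'v) gmor \<Rightarrow> bool" where
  "fibres_ghost_connected X Y \<phi> \<longleftrightarrow>
     (\<forall>v \<in> gV X. \<forall>w \<in> gV X. mV \<phi> v = mV \<phi> w \<longrightarrow> (v, w) \<in> (ghost_adj X Y \<phi>)\<^sup>*)"

lemma fibres_ghost_connectedD: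
  "fibres_ghost_connected X Y \<phi> \<Longrightarrow> v \<in> gV X \<Longrightarrow> w \<in> gV X \<Longrightarrow> mV \<phi> v = mV \<phi> w \<Longrightarrow>
    (v, w) \<in> (ghost_adj X Y \<phi>)\<^sup>*"
  unfolding fibres_ghost_connected_def by blast

lemma ghost_adj_mor_comp_outer:
  assumes "is_mor Y Z \<psi>"
  shows "ghost_adj X Y \<phi> \<subseteq> ghost_adj X Z (mor_comp X Y Z \<psi> \<phi>)"
proof -
  have "gF X - mF \<phi> ` gF Y \<subseteq> gF X - mF (mor_comp X Y Z \<psi> \<phi>) ` gF Z"
    using is_morD(7)[OF assms] by (auto simp: mF_mor_comp)
  then show ?thesis
    unfolding ghost_adj_def using mI_mor_comp_outer[OF assms] by force
qed

lemma ghost_adj_mor_comp_inner: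
  assumes \<phi>: "is_mor X Y \<phi>" and \<psi>: "is_mor Y Z \<psi>" and g: "g \<in> gF Y - mF \<psi> ` gF Z"
  shows "(gbd X (mF \<phi> g), gbd X (mF \<phi> (mI \<psi> g))) \<in> ghost_adj X Z (mor_comp X Y Z \<psi> \<phi>)"
  unfolding ghost_adj_def mor_comp_contracted_flags[OF \<phi> \<psi>]
  using g mI_mor_comp_inner[OF \<phi> \<psi> g] by force

lemma ghost_path_lift:
  assumes \<phi>: "is_mor X Y \<phi>" and \<psi>: "is_mor Y Z \<psi>" and conn: "fibres_ghost_connected X Y \<phi>"
    and path: "(a, b) \<in> (ghost_adj Y Z \<psi>)\<^sup>*"
    and v: "v \<in> gV X" "mV \<phi> v = a" and w: "w \<in> gV X" "mV \<phi> w = b"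
  shows "(v, w) \<in> (ghost_adj X Z (mor_comp X Y Z \<psi> \<phi>))\<^sup>*"
  using path w
proof (induction arbitrary: w rule: rtrancl_induct)
  case base
  then show ?case
    using conn v rtrancl_mono[OF ghost_adj_mor_comp_outer[OF \<psi>]]
    by (blast dest: fibres_ghost_connectedD)
next
  case (step b c)
  note P = is_morD[OF \<phi>] and Q = is_morD[OF \<psi>]
  from step.hyps(2) obtain g where g: "g \<in> gF Y - mF \<psi> ` gF Z"
    and bc: "b = gbd Y g" "c = gbd Y (mI \<psi> g)"
    unfolding ghost_adj_def by blast
  have g': "mI \<psi> g \<in> gF Y" using g Q(9) by blast
  let ?x = "gbd X (mF \<phi> g)" and ?y = "gbd X (mF \<phi> (mI \<psi> g))"
  have xy: "?x \<in> gV X" "?y \<in> gV X"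
    using g g' P(1,7) by (auto intro: is_graph_bd_in)
  have "(v, ?x) \<in> (ghost_adj X Z (mor_comp X Y Z \<psi> \<phi>))\<^sup>*"
    using step.IH xy(1) g bc P(12) by auto
  also have "(?x, ?y) \<in> ghost_adj X Z (mor_comp X Y Z \<psi> \<phi>)"
    using ghost_adj_mor_comp_inner[OF \<phi> \<psi> g] .
  also have "(?y, w) \<in> (ghost_adj X Z (mor_comp X Y Z \<psi> \<phi>))\<^sup>*"
    using fibres_ghost_connectedD[OF conn xy(2) step.prems(1)] g' bc step.prems(2) P(12)
      rtrancl_mono[OF ghost_adj_mor_comp_outer[OF \<psi>]] by auto
  finally show ?case .
qed

lemma fibres_ghost_connected_comp:
  assumes \<phi>: "is_mor X Y \<phi>" and \<psi>: "is_mor Y Z \<psi>"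
    and "fibres_ghost_connected X Y \<phi>" "fibres_ghost_connected Y Z \<psi>"
  shows "fibres_ghost_connected X Z (mor_comp X Y Z \<psi> \<phi>)"
  unfolding fibres_ghost_connected_def
proof (intro ballI impI)
  fix v w assume v: "v \<in> gV X" and w: "w \<in> gV X"
    and "mV (mor_comp X Y Z \<psi> \<phi>) v = mV (mor_comp X Y Z \<psi> \<phi>) w"
  then have "mV \<psi> (mV \<phi> v) = mV \<psi> (mV \<phi> w)" by (simp add: mV_mor_comp)
  moreover have "mV \<phi> v \<in> gV Y" "mV \<phi> w \<in> gV Y"
    using v w is_morD(6)[OF \<phi>] by auto
  ultimately have "(mV \<phi> v, mV \<phi> w) \<in> (ghost_adj Y Z \<psi>)\<^sup>*"
    using assms(4) by (blast dest: fibres_ghost_connectedD)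
  then show "(v, w) \<in> (ghost_adj X Z (mor_comp X Y Z \<psi> \<phi>))\<^sup>*"
    using ghost_path_lift[OF \<phi> \<psi> assms(3)] v w by blast
qed

lemma fibres_ghost_connected_iso:
  assumes "is_iso_mor X Y \<phi>"
  shows "fibres_ghost_connected X Y \<phi>"
  using assms by (auto simp: fibres_ghost_connected_def is_iso_mor_def bij_betw_def inj_on_def)

lemma aggregate_contr_target:
  assumes "is_aggregate X"
  shows "is_aggregate (contr_target X s t)"
  using assms by (auto simp: is_aggregate_def is_graph_def contr_target_def)

lemma contracted_flags_contr_mor:
  assumes "s \<in> gF X" "t \<in> gF X"
  shows "gF X - mF (contr_mor X s t) ` gF (contr_target X s t) = {s, t}"
  using assms by (auto simp: contr_mor_def contr_target_def)

lemma is_mor_contr_mor: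
  assumes X: "is_aggregate X" and st: "s \<in> gF X" "t \<in> gF X" "s \<noteq> t"
  shows "is_mor X (contr_target X s t) (contr_mor X s t)"
proof (rule is_mor_aggregateI[OF X aggregate_contr_target[OF X]],
    unfold contracted_flags_contr_mor[OF st(1,2)])
  have "gbd X f \<in> gV X" if "f \<in> gF X" for f
    using X that by (simp add: is_aggregate_def is_graph_bd_in)
  then show "mV (contr_mor X s t) (gbd X (mF (contr_mor X s t) f)) = gbd (contr_target X s t) f"
    if "f \<in> gF (contr_target X s t)" for f
    using that by (simp add: contr_mor_def contr_target_def)
  show "mV (contr_mor X s t) (gbd X f) = mV (contr_mor X s t) (gbd X (mI (contr_mor X s t) f))"
    if "f \<in> {s, t}" for f
    using that st X by (auto simp: contr_mor_def contr_vmap_def is_aggregate_def is_graph_bd_in)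
qed (use st in \<open>auto simp: contr_mor_def contr_target_def inj_on_def\<close>)

lemma fibres_ghost_connected_contr_mor:
  assumes st: "s \<in> gF X" "t \<in> gF X" "s \<noteq> t"
  shows "fibres_ghost_connected X (contr_target X s t) (contr_mor X s t)"
  unfolding fibres_ghost_connected_def
proof (intro ballI impI)
  fix v w assume "v \<in> gV X" "w \<in> gV X"
    and "mV (contr_mor X s t) v = mV (contr_mor X s t) w"
  then have "v = w \<or> {v, w} = {gbd X s, gbd X t}"
    by (auto simp: contr_mor_def contr_vmap_def split: if_splits)
  moreover have "(gbd X s, gbd X t) \<in> ghost_adj X (contr_target X s t) (contr_mor X s t)"
    "(gbd X t, gbd X s) \<in> ghost_adj X (contr_target X s t) (contr_mor X s t)"
    unfolding ghost_adj_def contracted_flags_contr_mor[OF st(1,2)]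
    using st by (force simp: contr_mor_def)+
  ultimately show "(v, w) \<in> (ghost_adj X (contr_target X s t) (contr_mor X s t))\<^sup>*"
    by (auto simp: doubleton_eq_iff)
qed

lemma ctd_mor_aggregate: "ctd_mor X Y \<phi> \<Longrightarrow> is_aggregate X \<and> is_aggregate Y"
  by (induction rule: ctd_mor.induct) (auto intro: aggregate_contr_target)

lemma ctd_mor_is_mor: "ctd_mor X Y \<phi> \<Longrightarrow> is_mor X Y \<phi>"
proof (induction rule: ctd_mor.induct)
  case (comp X Y \<phi> Z \<psi>)
  then show ?case
    using ctd_mor_aggregate is_mor_comp_aggregate by blast
qed (auto simp: is_iso_mor_def intro: is_mor_contr_mor)

lemma ctd_mor_fibres_ghost_connected: "ctd_mor X Y \<phi> \<Longrightarrow> fibres_ghost_connected X Y \<phi>"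
proof (induction rule: ctd_mor.induct)
  case (comp X Y \<phi> Z \<psi>)
  then show ?case
    using ctd_mor_is_mor fibres_ghost_connected_comp by blast
qed (auto intro: fibres_ghost_connected_iso fibres_ghost_connected_contr_mor)

lemma ghost_simps [simp]:
  "gF (ghost X Y \<phi>) = gF X" "gV (ghost X Y \<phi>) = gV X" "gbd (ghost X Y \<phi>) = gbd X"
  "ginv (ghost X Y \<phi>) f = (if f \<in> mF \<phi> ` gF Y then f else mI \<phi> f)"
  by (simp_all add: ghost_def)

lemma is_graph_ghost:
  assumes "is_mor X Y \<phi>"
  shows "is_graph (ghost X Y \<phi>)"
proof -
  note P = is_morD[OF assms]
  have "mI \<phi> f \<in> gF X \<and> mI \<phi> f \<notin> mF \<phi> ` gF Y \<and> mI \<phi> (mI \<phi> f) = f"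
    if "f \<in> gF X" "f \<notin> mF \<phi> ` gF Y" for f
    using P(9,10) that by blast
  then show ?thesis
    using P(1) by (auto simp: is_graph_def)
qed

definition preserves_ghost :: "('f, 'v) gph \<Rightarrow> ('f, 'v) gph \<Rightarrow> ('f, 'v) gmor \<Rightarrow> ('f, 'v) gmor \<Rightarrow> bool" where
  "preserves_ghost X Y \<phi> \<alpha> \<longleftrightarrow> mF \<alpha> ` mF \<phi> ` gF Y = mF \<phi> ` gF Y \<and>
     (\<forall>f \<in> gF X - mF \<phi> ` gF Y. mI \<phi> (mF \<alpha> f) = mF \<alpha> (mI \<phi> f))"

lemma preserves_ghost_contracted_flags:
  assumes "is_mor X Y \<phi>" "is_iso_mor X X \<alpha>" "preserves_ghost X Y \<phi> \<alpha>"
  shows "mF \<alpha> ` (gF X - mF \<phi> ` gF Y) = gF X - mF \<phi> ` gF Y"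
  using assms(3) automorphismD(5)[OF assms(2)] is_morD(7)[OF assms(1)]
  by (intro bij_betw_image_Diff_invariant) (simp_all add: preserves_ghost_def)

(* The flags retained by phi are exactly the fixed points of the ghost involution. *)
lemma ghost_automorphism_moved_flag:
  assumes \<phi>: "is_mor X Y \<phi>" and \<alpha>: "is_iso_mor (ghost X Y \<phi>) (ghost X Y \<phi>) \<alpha>"
    and f: "f \<in> gF X" and moved: "mF \<alpha> f \<notin> mF \<phi> ` gF Y"
  shows "mI \<phi> (mF \<alpha> f) = mF \<alpha> (if f \<in> mF \<phi> ` gF Y then f else mI \<phi> f)"
proof -
  note A = automorphismD[OF \<alpha>, unfolded ghost_simps]
  have "mF \<alpha> f \<in> gF X"
    using A(5) f by (auto simp: bij_betw_def)
  then have "mI \<phi> (mF \<alpha> f) \<noteq> mF \<alpha> f"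
    using is_morD(11)[OF \<phi>] moved by blast
  then show ?thesis
    using A(7)[OF f] moved by simp
qed

lemma ghost_automorphismD:
  assumes \<phi>: "is_mor X Y \<phi>" and X: "is_aggregate X"
    and \<alpha>: "is_iso_mor (ghost X Y \<phi>) (ghost X Y \<phi>) \<alpha>"
  shows "is_iso_mor X X \<alpha>" and "preserves_ghost X Y \<phi> \<alpha>"
proof -
  note A = automorphismD[OF \<alpha>, unfolded ghost_simps] and P = is_morD[OF \<phi>]
  note moved = ghost_automorphism_moved_flag[OF \<phi> \<alpha>]
  have in_F: "mF \<alpha> f \<in> gF X" if "f \<in> gF X" for f
    using A(5) that by (auto simp: bij_betw_def)
  show aut: "is_iso_mor X X \<alpha>"
  proof (rule automorphismI)
    show "ginv X (mF \<alpha> f) = mF \<alpha> (ginv X f)" if "f \<in> gF X" for f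
      using X in_F that by (simp add: is_aggregate_def)
  qed (fact A(2-6) automorphism_mI[OF \<alpha>] P(1))+
  have "mF \<alpha> f \<in> mF \<phi> ` gF Y" if "f \<in> mF \<phi> ` gF Y" for f
  proof (rule ccontr)
    assume out: "mF \<alpha> f \<notin> mF \<phi> ` gF Y"
    have "f \<in> gF X" using that P(7) by blast
    then have "mI \<phi> (mF \<alpha> f) = mF \<alpha> f" using moved out that by simp
    then show False using P(11) in_F \<open>f \<in> gF X\<close> out by blast
  qed
  then have "mF \<alpha> ` mF \<phi> ` gF Y \<subseteq> mF \<phi> ` gF Y" by blast
  moreover have "finite (mF \<phi> ` gF Y)" using P(2) by (simp add: is_graph_def)
  moreover have "inj_on (mF \<alpha>) (mF \<phi> ` gF Y)"
    using inj_on_subset[OF bij_betw_imp_inj_on[OF A(5)] P(7)] .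
  ultimately have retained: "mF \<alpha> ` mF \<phi> ` gF Y = mF \<phi> ` gF Y"
    by (simp add: endo_inj_surj)
  have "mI \<phi> (mF \<alpha> f) = mF \<alpha> (mI \<phi> f)" if f: "f \<in> gF X - mF \<phi> ` gF Y" for f
  proof -
    have "mF \<alpha> f \<in> gF X - mF \<phi> ` gF Y"
      using bij_betw_image_Diff_invariant[OF A(5) P(7) retained] f by blast
    then show ?thesis
      using moved[of f] f by simp
  qed
  with retained show "preserves_ghost X Y \<phi> \<alpha>"
    unfolding preserves_ghost_def by blast
qed

lemma ghost_automorphismI:
  assumes \<phi>: "is_mor X Y \<phi>" and \<alpha>: "is_iso_mor X X \<alpha>" and pres: "preserves_ghost X Y \<phi> \<alpha>"
  shows "is_iso_mor (ghost X Y \<phi>) (ghost X Y \<phi>) \<alpha>"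
proof (rule automorphismI)
  show "ginv (ghost X Y \<phi>) (mF \<alpha> f) = mF \<alpha> (ginv (ghost X Y \<phi>) f)"
    if f: "f \<in> gF (ghost X Y \<phi>)" and moved: "ginv (ghost X Y \<phi>) (mF \<alpha> f) \<noteq> mF \<alpha> f" for f
  proof -
    have "mF \<alpha> f \<notin> mF \<phi> ` gF Y" using moved by auto
    then have "f \<notin> mF \<phi> ` gF Y" using pres unfolding preserves_ghost_def by blast
    then show ?thesis
      using f pres \<open>mF \<alpha> f \<notin> mF \<phi> ` gF Y\<close> unfolding preserves_ghost_def by simp
  qed
qed (use is_graph_ghost[OF \<phi>] automorphismD[OF \<alpha>] automorphism_mI[OF \<alpha>] in simp_all)

lemma ghost_automorphism_iff:
  assumes "is_mor X Y \<phi>" and "is_aggregate X"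
  shows "is_iso_mor (ghost X Y \<phi>) (ghost X Y \<phi>) \<alpha> \<longleftrightarrow>
    is_iso_mor X X \<alpha> \<and> preserves_ghost X Y \<phi> \<alpha>"
  using assms ghost_automorphismD ghost_automorphismI by blast

lemma mI_mor_comp_automorphism_left:
  assumes "is_iso_mor Y Y \<beta>"
  shows "mI (mor_comp X Y Y \<beta> \<phi>) = restrict (mI \<phi>) (gF X - mF \<phi> ` gF Y)"
proof -
  have "mF \<beta> ` gF Y = gF Y"
    using automorphismD(5)[OF assms] by (simp add: bij_betw_def)
  then show ?thesis
    by (simp add: mor_comp_def cong: restrict_cong)
qed

lemma mI_mor_comp_automorphism_right:
  assumes "is_iso_mor X X \<alpha>"
  shows "mI (mor_comp X X Y \<phi> \<alpha>) =
    restrict (\<lambda>f. mF \<alpha> (mI \<phi> (the_inv_into (gF X) (mF \<alpha>) f))) (gF X - mF \<alpha> ` mF \<phi> ` gF Y)"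
proof -
  have "mF \<alpha> ` gF X = gF X"
    using automorphismD(5)[OF assms] by (simp add: bij_betw_def)
  then show ?thesis
    by (simp add: mor_comp_def cong: restrict_cong)
qed

lemma retained_flags_invariant:
  assumes \<beta>: "is_iso_mor Y Y \<beta>" and F: "\<forall>f \<in> gF Y. mF \<phi> (mF \<beta> f) = mF \<alpha> (mF \<phi> f)"
  shows "mF \<alpha> ` mF \<phi> ` gF Y = mF \<phi> ` gF Y"
proof -
  have "mF \<alpha> ` mF \<phi> ` gF Y = mF \<phi> ` mF \<beta> ` gF Y"
    unfolding image_image using F by (intro image_cong) auto
  then show ?thesis
    using automorphismD(5)[OF \<beta>] by (simp add: bij_betw_def)
qed

lemma mI_mor_comp_automorphisms_eq_iff:
  assumes \<phi>: "is_mor X Y \<phi>" and \<alpha>: "is_iso_mor X X \<alpha>" and \<beta>: "is_iso_mor Y Y \<beta>"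
    and retained: "mF \<alpha> ` mF \<phi> ` gF Y = mF \<phi> ` gF Y"
  shows "mI (mor_comp X Y Y \<beta> \<phi>) = mI (mor_comp X X Y \<phi> \<alpha>) \<longleftrightarrow>
    (\<forall>f \<in> gF X - mF \<phi> ` gF Y. mI \<phi> (mF \<alpha> f) = mF \<alpha> (mI \<phi> f))"
    (is "_ \<longleftrightarrow> ?I")
proof -
  let ?C = "gF X - mF \<phi> ` gF Y" and ?inv = "the_inv_into (gF X) (mF \<alpha>)"
  have bij: "bij_betw (mF \<alpha>) (gF X) (gF X)" by (rule automorphismD(5)[OF \<alpha>])
  have C: "mF \<alpha> ` ?C = ?C"
    using bij_betw_image_Diff_invariant[OF bij is_morD(7)[OF \<phi>] retained] .
  have inv: "?inv (mF \<alpha> f) = f" if "f \<in> ?C" for f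
    using that bij_betw_imp_inj_on[OF bij] by (simp add: the_inv_into_f_f)
  have "mI (mor_comp X Y Y \<beta> \<phi>) = mI (mor_comp X X Y \<phi> \<alpha>) \<longleftrightarrow>
      (\<forall>x \<in> ?C. mI \<phi> x = mF \<alpha> (mI \<phi> (?inv x)))"
    unfolding mI_mor_comp_automorphism_left[OF \<beta>] mI_mor_comp_automorphism_right[OF \<alpha>] retained
    by (rule restrict_eq_restrict_iff)
  also have "\<dots> \<longleftrightarrow> ?I"
  proof
    assume h: "\<forall>x \<in> ?C. mI \<phi> x = mF \<alpha> (mI \<phi> (?inv x))"
    show ?I
    proof
      fix f assume f: "f \<in> ?C"
      then have "mF \<alpha> f \<in> mF \<alpha> ` ?C" by (rule imageI)
      then have "mF \<alpha> f \<in> ?C" unfolding C .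
      then show "mI \<phi> (mF \<alpha> f) = mF \<alpha> (mI \<phi> f)"
        using h inv[OF f] by simp
    qed
  next
    assume h: ?I
    show "\<forall>x \<in> ?C. mI \<phi> x = mF \<alpha> (mI \<phi> (?inv x))"
    proof
      fix x assume "x \<in> ?C"
      then obtain f where "f \<in> ?C" "x = mF \<alpha> f"
        using C by blast
      then show "mI \<phi> x = mF \<alpha> (mI \<phi> (?inv x))"
        using h inv by simp
    qed
  qed
  finally show ?thesis .
qed

lemma automorphisms_commute_iff:
  assumes \<phi>: "is_mor X Y \<phi>" and \<alpha>: "is_iso_mor X X \<alpha>" and \<beta>: "is_iso_mor Y Y \<beta>"
  shows "mor_comp X Y Y \<beta> \<phi> = mor_comp X X Y \<phi> \<alpha> \<longleftrightarrow>
    (\<forall>v \<in> gV X. mV \<beta> (mV \<phi> v) = mV \<phi> (mV \<alpha> v)) \<and>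
    (\<forall>f \<in> gF Y. mF \<phi> (mF \<beta> f) = mF \<alpha> (mF \<phi> f)) \<and>
    (\<forall>f \<in> gF X - mF \<phi> ` gF Y. mI \<phi> (mF \<alpha> f) = mF \<alpha> (mI \<phi> f))"
proof -
  have "mor_comp X Y Y \<beta> \<phi> = mor_comp X X Y \<phi> \<alpha> \<longleftrightarrow>
      mV (mor_comp X Y Y \<beta> \<phi>) = mV (mor_comp X X Y \<phi> \<alpha>) \<and>
      mF (mor_comp X Y Y \<beta> \<phi>) = mF (mor_comp X X Y \<phi> \<alpha>) \<and>
      mI (mor_comp X Y Y \<beta> \<phi>) = mI (mor_comp X X Y \<phi> \<alpha>)"
    by (simp add: mor_comp_def)
  then show ?thesis
    using mI_mor_comp_automorphisms_eq_iff[OF \<phi> \<alpha> \<beta> retained_flags_invariant[OF \<beta>]]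
    by (auto simp: mV_mor_comp mF_mor_comp restrict_eq_restrict_iff)
qed

lemma commuting_automorphisms_preserve_ghost:
  assumes \<phi>: "is_mor X Y \<phi>" and \<alpha>: "is_iso_mor X X \<alpha>" and \<beta>: "is_iso_mor Y Y \<beta>"
    and comm: "mor_comp X Y Y \<beta> \<phi> = mor_comp X X Y \<phi> \<alpha>"
  shows "preserves_ghost X Y \<phi> \<alpha>"
  using comm retained_flags_invariant[OF \<beta>]
  unfolding automorphisms_commute_iff[OF \<phi> \<alpha> \<beta>] preserves_ghost_def by blast

lemma commuting_automorphism_unique:
  assumes \<phi>: "is_mor X Y \<phi>" and \<alpha>: "is_iso_mor X X \<alpha>"
    and \<beta>: "is_iso_mor Y Y \<beta>" "mor_comp X Y Y \<beta> \<phi> = mor_comp X X Y \<phi> \<alpha>"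
    and \<beta>': "is_iso_mor Y Y \<beta>'" "mor_comp X Y Y \<beta>' \<phi> = mor_comp X X Y \<phi> \<alpha>"
  shows "\<beta> = \<beta>'"
proof (rule gmor.equality)
  note B = automorphismD[OF \<beta>(1)] and B' = automorphismD[OF \<beta>'(1)] and P = is_morD[OF \<phi>]
  have V: "mV \<beta> (mV \<phi> v) = mV \<beta>' (mV \<phi> v)" if "v \<in> gV X" for v
    using \<beta>(2) \<beta>'(2) that
    unfolding automorphisms_commute_iff[OF \<phi> \<alpha> \<beta>(1)] automorphisms_commute_iff[OF \<phi> \<alpha> \<beta>'(1)]
    by simp
  have F: "mF \<phi> (mF \<beta> f) = mF \<phi> (mF \<beta>' f)" if "f \<in> gF Y" for f
    using \<beta>(2) \<beta>'(2) that
    unfolding automorphisms_commute_iff[OF \<phi> \<alpha> \<beta>(1)] automorphisms_commute_iff[OF \<phi> \<alpha> \<beta>'(1)]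
    by simp
  show "mV \<beta> = mV \<beta>'"
  proof (rule extensionalityI[OF B(2) B'(2)])
    fix y assume "y \<in> gV Y"
    then obtain v where "v \<in> gV X" "y = mV \<phi> v"
      using P(6) by blast
    then show "mV \<beta> y = mV \<beta>' y"
      using V by simp
  qed
  show "mF \<beta> = mF \<beta>'"
  proof (rule extensionalityI[OF B(3) B'(3)])
    fix f assume f: "f \<in> gF Y"
    then have "mF \<beta> f \<in> gF Y" "mF \<beta>' f \<in> gF Y"
      using B(5) B'(5) by (auto simp: bij_betw_def)
    then show "mF \<beta> f = mF \<beta>' f"
      using F[OF f] P(8) by (simp add: inj_on_def)
  qed
  show "mI \<beta> = mI \<beta>'"
    using automorphism_mI[OF \<beta>(1)] automorphism_mI[OF \<beta>'(1)] by simp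
qed simp

(* The choice of a phi-preimage is irrelevant once the fibres of phi_V are ghost-connected. *)
definition induced_automorphism ::
    "('f, 'v) gph \<Rightarrow> ('f, 'v) gph \<Rightarrow> ('f, 'v) gmor \<Rightarrow> ('f, 'v) gmor \<Rightarrow> ('f, 'v) gmor" where
  "induced_automorphism X Y \<phi> \<alpha> =
     \<lparr> mV = restrict (\<lambda>y. mV \<phi> (mV \<alpha> (SOME v. v \<in> gV X \<and> mV \<phi> v = y))) (gV Y),
       mF = restrict (\<lambda>f. the_inv_into (gF Y) (mF \<phi>) (mF \<alpha> (mF \<phi> f))) (gF Y),
       mI = (\<lambda>_. undefined) \<rparr>"

context
  fixes X Y :: "('f, 'v) gph" and \<phi> \<alpha> :: "('f, 'v) gmor"
  assumes \<phi>: "is_mor X Y \<phi>" and \<alpha>: "is_iso_mor X X \<alpha>" and pres: "preserves_ghost X Y \<phi> \<alpha>"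
begin

lemma preserves_ghost_rtrancl:
  assumes "(v, w) \<in> (ghost_adj X Y \<phi>)\<^sup>*"
  shows "mV \<phi> (mV \<alpha> v) = mV \<phi> (mV \<alpha> w)"
  using assms
proof (induction rule: rtrancl_induct)
  case (step w u)
  note A = automorphismD[OF \<alpha>] and P = is_morD[OF \<phi>]
  from step.hyps(2) obtain f where f: "f \<in> gF X - mF \<phi> ` gF Y"
    and wu: "w = gbd X f" "u = gbd X (mI \<phi> f)"
    unfolding ghost_adj_def by blast
  obtain h where h: "h \<in> gF X - mF \<phi> ` gF Y" and fh: "f = mF \<alpha> h"
    using f preserves_ghost_contracted_flags[OF \<phi> \<alpha> pres] by blast
  have "mI \<phi> h \<in> gF X" using h P(9) by blast
  then have "mV \<alpha> u = gbd X (mI \<phi> h)"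
    using wu h fh pres A(6) unfolding preserves_ghost_def by simp
  moreover have "mV \<alpha> w = gbd X h"
    using wu h fh A(6) by simp
  ultimately show ?case
    using step.IH P(13)[OF h] by simp
qed simp

lemma induced_automorphism_mV:
  assumes conn: "fibres_ghost_connected X Y \<phi>" and v: "v \<in> gV X"
  shows "mV (induced_automorphism X Y \<phi> \<alpha>) (mV \<phi> v) = mV \<phi> (mV \<alpha> v)"
proof -
  let ?w = "SOME w. w \<in> gV X \<and> mV \<phi> w = mV \<phi> v"
  have w: "?w \<in> gV X \<and> mV \<phi> ?w = mV \<phi> v"
    using someI[of "\<lambda>w. w \<in> gV X \<and> mV \<phi> w = mV \<phi> v" v] v by blast
  then have "mV \<phi> (mV \<alpha> ?w) = mV \<phi> (mV \<alpha> v)"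
    using v conn by (blast dest: fibres_ghost_connectedD intro: preserves_ghost_rtrancl)
  moreover have "mV \<phi> v \<in> gV Y"
    using v is_morD(6)[OF \<phi>] by blast
  ultimately show ?thesis
    by (simp add: induced_automorphism_def)
qed

lemma induced_automorphism_mF:
  assumes f: "f \<in> gF Y"
  shows "mF (induced_automorphism X Y \<phi> \<alpha>) f \<in> gF Y"
    and "mF \<phi> (mF (induced_automorphism X Y \<phi> \<alpha>) f) = mF \<alpha> (mF \<phi> f)"
proof -
  obtain g where g: "g \<in> gF Y" "mF \<alpha> (mF \<phi> f) = mF \<phi> g"
    using f pres unfolding preserves_ghost_def by blast
  moreover have "mF (induced_automorphism X Y \<phi> \<alpha>) f = g"
    using f g is_morD(8)[OF \<phi>] by (simp add: induced_automorphism_def the_inv_into_f_f)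
  ultimately show "mF (induced_automorphism X Y \<phi> \<alpha>) f \<in> gF Y"
    and "mF \<phi> (mF (induced_automorphism X Y \<phi> \<alpha>) f) = mF \<alpha> (mF \<phi> f)"
    by simp_all
qed

lemma induced_automorphism_is_automorphism:
  assumes Y: "is_aggregate Y" and conn: "fibres_ghost_connected X Y \<phi>"
  shows "is_iso_mor Y Y (induced_automorphism X Y \<phi> \<alpha>)"
proof (rule aggregate_automorphismI[OF Y])
  let ?\<beta> = "induced_automorphism X Y \<phi> \<alpha>"
  note A = automorphismD[OF \<alpha>] and P = is_morD[OF \<phi>]
  note \<beta>V = induced_automorphism_mV[OF conn] and \<beta>F = induced_automorphism_mF
  have \<alpha>V: "mV \<alpha> ` gV X = gV X" using A(4) by (simp add: bij_betw_def)
  show "mV ?\<beta> \<in> extensional (gV Y)" "mF ?\<beta> \<in> extensional (gF Y)" "mI ?\<beta> = (\<lambda>_. undefined)"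
    by (simp_all add: induced_automorphism_def)
  have "mV ?\<beta> ` gV Y = mV ?\<beta> ` mV \<phi> ` gV X" using P(6) by simp
  also have "\<dots> = mV \<phi> ` mV \<alpha> ` gV X" unfolding image_image using \<beta>V by simp
  finally show "mV ?\<beta> ` gV Y = gV Y" using \<alpha>V P(6) by simp
  show "mF ?\<beta> ` gF Y \<subseteq> gF Y" using \<beta>F(1) by blast
  show "inj_on (mF ?\<beta>) (gF Y)"
  proof (rule inj_onI)
    fix f g assume fg: "f \<in> gF Y" "g \<in> gF Y" "mF ?\<beta> f = mF ?\<beta> g"
    then have "mF \<alpha> (mF \<phi> f) = mF \<alpha> (mF \<phi> g)" using \<beta>F(2) by metis
    then have "mF \<phi> f = mF \<phi> g" using fg P(7) bij_betw_imp_inj_on[OF A(5)] by (auto dest: inj_onD)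
    then show "f = g" using fg P(8) by (auto dest: inj_onD)
  qed
  show "mV ?\<beta> (gbd Y (mF ?\<beta> f)) = gbd Y f" if f: "f \<in> gF Y" for f
  proof -
    have \<phi>f: "mF \<phi> f \<in> gF X" and \<alpha>\<phi>f: "mF \<alpha> (mF \<phi> f) \<in> gF X"
      using f P(7) A(5) by (auto simp: bij_betw_def)
    have "gbd Y (mF ?\<beta> f) = mV \<phi> (gbd X (mF \<alpha> (mF \<phi> f)))"
      using P(12)[OF \<beta>F(1)[OF f]] \<beta>F(2)[OF f] by simp
    then have "mV ?\<beta> (gbd Y (mF ?\<beta> f)) = mV \<phi> (mV \<alpha> (gbd X (mF \<alpha> (mF \<phi> f))))"
      using \<beta>V P(1) \<alpha>\<phi>f by (simp add: is_graph_bd_in)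
    also have "\<dots> = gbd Y f"
      using A(6)[OF \<phi>f] P(12)[OF f] by simp
    finally show ?thesis .
  qed
qed

lemma induced_automorphism_commutes:
  assumes Y: "is_aggregate Y" and conn: "fibres_ghost_connected X Y \<phi>"
  shows "mor_comp X Y Y (induced_automorphism X Y \<phi> \<alpha>) \<phi> = mor_comp X X Y \<phi> \<alpha>"
  unfolding automorphisms_commute_iff[OF \<phi> \<alpha> induced_automorphism_is_automorphism[OF Y conn]]
  using induced_automorphism_mV[OF conn] induced_automorphism_mF(2) pres
  by (simp add: preserves_ghost_def)

end

lemma mor_comp_ghost: "mor_comp (ghost X Y \<phi>) (ghost X Y \<phi>) (ghost X Y \<phi>) \<alpha> \<beta> = mor_comp X X X \<alpha> \<beta>"
  by (simp only: mor_comp_def ghost_simps)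

lemma arrow_aut_group_carrier_iff:
  "(\<alpha>, \<beta>) \<in> carrier (arrow_aut_group X Y \<phi>) \<longleftrightarrow>
    is_iso_mor X X \<alpha> \<and> is_iso_mor Y Y \<beta> \<and> mor_comp X Y Y \<beta> \<phi> = mor_comp X X Y \<phi> \<alpha>"
  by (simp add: arrow_aut_group_def)

lemma fst_iso_arrow_aut_group_aut_ghost:
  assumes \<phi>: "is_mor X Y \<phi>" and X: "is_aggregate X" and Y: "is_aggregate Y"
    and conn: "fibres_ghost_connected X Y \<phi>"
  shows "fst \<in> iso (arrow_aut_group X Y \<phi>) (aut_group (ghost X Y \<phi>))"
proof (rule isoI)
  let ?A = "arrow_aut_group X Y \<phi>" and ?G = "aut_group (ghost X Y \<phi>)"
  have carrier_G: "\<alpha> \<in> carrier ?G \<longleftrightarrow> is_iso_mor X X \<alpha> \<and> preserves_ghost X Y \<phi> \<alpha>" for \<alpha>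
    using ghost_automorphism_iff[OF \<phi> X] by (simp add: aut_group_def)
  have fst_carrier: "fst p \<in> carrier ?G" if "p \<in> carrier ?A" for p
    using that commuting_automorphisms_preserve_ghost[OF \<phi>]
    by (cases p) (auto simp: carrier_G arrow_aut_group_carrier_iff)
  show "fst \<in> hom ?A ?G"
    using fst_carrier
    by (intro homI) (auto simp: arrow_aut_group_def aut_group_def mor_comp_ghost)
  show "bij_betw fst (carrier ?A) (carrier ?G)"
    unfolding bij_betw_def
  proof
    show "inj_on fst (carrier ?A)"
      using commuting_automorphism_unique[OF \<phi>]
      by (intro inj_onI) (auto simp: arrow_aut_group_carrier_iff)
    have "\<alpha> \<in> fst ` carrier ?A" if "\<alpha> \<in> carrier ?G" for \<alpha>
    proof -
      have "(\<alpha>, induced_automorphism X Y \<phi> \<alpha>) \<in> carrier ?A"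
        using that induced_automorphism_is_automorphism[OF \<phi> _ _ Y conn]
          induced_automorphism_commutes[OF \<phi> _ _ Y conn]
        by (simp add: carrier_G arrow_aut_group_carrier_iff)
      then show ?thesis by force
    qed
    then show "fst ` carrier ?A = carrier ?G"
      using fst_carrier by blast
  qed
qed

theorem corollary2p14:
  fixes X Y :: "('f, 'v) gph" and \<phi> :: "('f, 'v) gmor"
  assumes "ctd_mor X Y \<phi>"
  shows "arrow_aut_group X Y \<phi> \<cong> aut_group (ghost X Y \<phi>)"
  using ctd_mor_is_mor[OF assms] ctd_mor_aggregate[OF assms] ctd_mor_fibres_ghost_connected[OF assms]
  by (blast intro: is_isoI fst_iso_arrow_aut_group_aut_ghost)

end
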